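(* Let $H:\mathbb{R}_+\to[0,1]$ be a measurable function with $\|H\|_1:=\int_0^\infty H(x)\,dx<\infty$ and $\|H\|_2^2:=\int_0^\infty H(x)^2\,dx<\|H\|_1$. Fix $\tau>0$ and $\alpha>0$. For positive integers $L$ set $R_L=\ln(\tau L)/(2\|H\|_1)$. Let $\mathcal{P}_L$ be a Poisson point process of unit intensity on the torus $[0,L]$ (with $0$ and $L$ identified), with circular distance $\rho^L(x,y)=\min\{|x-y|,L-|x-y|\}$, and let $\tilde h^L(x,y)=H(\rho^L(x,y)/R_L)\mathbb{1}\{\rho^L(x,y)\le R_L^{1+1/\alpha}\}$. Let $\mathcal{G}_{\tilde h^L}(\mathcal{P}_L)$ be the random graph on vertex set $\mathcal{P}_L$ in which, conditionally on $\mathcal{P}_L$, each pair of distinct nodes $x,y$ is joined by an edge with probability $\tilde h^L(x,y)$, independently over pairs. For $m\in\mathbb{N}$, divide the torus into segments $A_i=[(i-1)/m,i/m)$, $i\in\Gamma=\{1,\dots,mL\}$, with centres $x_i$, and let $I_i$ be the indicator that $A_i$ contains exactly one node of $\mathcal{P}_L$ and that node is isolated in $\mathcal{G}_{\tilde h^L}(\mathcal{P}_L)$. Let $B_i=\{j\in\Gamma:\rho^L(x_i,x_j)\le 3R_L^{1+1/\alpha}\}$, $p_i=\mathbb{E}[I_i]$, and $b_1=\sum_{i\in\Gamma}\sum_{j\in B_i}p_ip_j$ (which depends on $m$ and $L$). Then $b_1$ tends to zero as $m\to\infty$ followed by $L\to\infty$, i.e. $\lim_{L\to\infty}\limsup_{m\to\infty}b_1=0$.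 *)

theory Defs
  imports "HOL-Analysis.Analysis" "HOL-Probability.Probability" "HOL-Probability.Product_PMF"
begin

definition torus_dist :: "real \<Rightarrow> real \<Rightarrow> real \<Rightarrow> real" where
  "torus_dist L x y = min \<bar>x - y\<bar> (L - \<bar>x - y\<bar>)"

definition L1norm :: "(real \<Rightarrow> real) \<Rightarrow> real" where
  "L1norm H = (LBINT x:{0..}. H x)"

definition RL :: "(real \<Rightarrow> real) \<Rightarrow> real \<Rightarrow> nat \<Rightarrow> real" where
  "RL H tau L = ln (tau * real L) / (2 * L1norm H)"

definition hL :: "(real \<Rightarrow> real) \<Rightarrow> real \<Rightarrow> real \<Rightarrow> nat \<Rightarrow> real \<Rightarrow> real \<Rightarrow> real" where
  "hL H tau alpha L x y =
     H (torus_dist (real L) x y / RL H tau L) *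
     (if torus_dist (real L) x y \<le> RL H tau L powr (1 + 1 / alpha) then 1 else 0)"

definition seg :: "nat \<Rightarrow> nat \<Rightarrow> real set" where
  "seg m i = {(real i - 1) / real m ..< real i / real m}"

definition centre :: "nat \<Rightarrow> nat \<Rightarrow> real" where
  "centre m i = (real i - 1 / 2) / real m"

text \<open>Unit-intensity Poisson process on [0,L): N ~ Poisson(L) points,
  positions i.i.d. uniform on [0,L).\<close>
definition point_positions :: "nat \<Rightarrow> nat \<Rightarrow> (nat \<Rightarrow> real) measure" where
  "point_positions L n = PiM {..<n} (\<lambda>_. uniform_measure lborel {0..<real L})"

text \<open>Conditionally on the points xs 0, ..., xs (n-1), each unordered pair {a,b}
  (encoded as (a,b) with a < b) is an edge independently with probability hL.\<close>
definition edge_pmf ::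
  "(real \<Rightarrow> real) \<Rightarrow> real \<Rightarrow> real \<Rightarrow> nat \<Rightarrow> nat \<Rightarrow> (nat \<Rightarrow> real) \<Rightarrow> (nat \<times> nat \<Rightarrow> bool) pmf" where
  "edge_pmf H tau alpha L n xs =
     Pi_pmf {(a, b). a < b \<and> b < n} False
       (\<lambda>(a, b). bernoulli_pmf (hL H tau alpha L (xs a) (xs b)))"

definition single_isolated ::
  "real set \<Rightarrow> nat \<Rightarrow> (nat \<Rightarrow> real) \<Rightarrow> (nat \<times> nat \<Rightarrow> bool) \<Rightarrow> bool" where
  "single_isolated A n xs E \<longleftrightarrow>
     (\<exists>k<n. xs k \<in> A \<and> (\<forall>j<n. j \<noteq> k \<longrightarrow> xs j \<notin> A)
            \<and> (\<forall>j<n. j \<noteq> k \<longrightarrow> \<not> E (min k j, max k j)))"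

definition p_iso :: "(real \<Rightarrow> real) \<Rightarrow> real \<Rightarrow> real \<Rightarrow> nat \<Rightarrow> nat \<Rightarrow> nat \<Rightarrow> real" where
  "p_iso H tau alpha m L i =
     (\<Sum>n. pmf (poisson_pmf (real L)) n *
        (\<integral>xs. measure_pmf.prob (edge_pmf H tau alpha L n xs)
                 {E. single_isolated (seg m i) n xs E} \<partial>point_positions L n))"

definition Gamma_idx :: "nat \<Rightarrow> nat \<Rightarrow> nat set" where
  "Gamma_idx m L = {1 .. m * L}"

definition B_idx :: "(real \<Rightarrow> real) \<Rightarrow> real \<Rightarrow> real \<Rightarrow> nat \<Rightarrow> nat \<Rightarrow> nat \<Rightarrow> nat set" where
  "B_idx H tau alpha m L i =
     {j \<in> Gamma_idx m L. torus_dist (real L) (centre m i) (centre m j)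
                          \<le> 3 * RL H tau L powr (1 + 1 / alpha)}"

definition b1 :: "(real \<Rightarrow> real) \<Rightarrow> real \<Rightarrow> real \<Rightarrow> nat \<Rightarrow> nat \<Rightarrow> real" where
  "b1 H tau alpha m L =
     (\<Sum>i\<in>Gamma_idx m L. \<Sum>j\<in>B_idx H tau alpha m L i.
        p_iso H tau alpha m L i * p_iso H tau alpha m L j)"

end

theory Submission
  imports Defs "HOL-Real_Asymp.Real_Asymp"
begin

text \<open>
  Fix the node positions. A union bound over the node k lying in A_i gives
  P(I_i | positions) \<le> \<Sum>_k 1_{A_i}(x_k) \<Prod>_{j \<noteq> k} (1 - h(x_k, x_j)).
  Integrating out the other uniformly distributed nodes, each factor has mean at most 1 - G/L,
  where G is any lower bound for the mass \<integral> h(y, z) dz of the connection function; unwrapping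
  the torus gives G = 2 R_L \<integral>_0^{R_L^{1/\<alpha>}} H. Hence E[I_i | n nodes] \<le> n (1 - G/L)^{n-1} / (mL),
  and mixing over n ~ Poisson(L) yields p_i \<le> e^{-G} / m. As |B_i| \<le> 12 m R_L^{1+1/\<alpha>} + 3,
  this gives b_1 \<le> L (12 R_L^{1+1/\<alpha>} + 3) e^{-2G} for every m. For large L the truncated
  integral exceeds 3/4 \<parallel>H\<parallel>_1, so e^{-2G} \<le> (\<tau>L)^{-3/2}, and the bound tends to 0.
\<close>


section \<open>Isolation given the node positions\<close>

text \<open>\<^const>\<open>bernoulli_pmf\<close> truncates its parameter to [0, 1], whereas \<^const>\<open>hL\<close> is only known
  to lie in [0, 1] for points of the torus.\<close>

definition clamp01 :: "real \<Rightarrow> real" where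
  "clamp01 p = min 1 (max 0 p)"

lemma clamp01_bounds: "0 \<le> clamp01 p" "clamp01 p \<le> 1"
  by (auto simp: clamp01_def)

lemma pmf_bernoulli_False_clamp01: "pmf (bernoulli_pmf p) False = 1 - clamp01 p"
  by (simp add: bernoulli_pmf.rep_eq clamp01_def)

lemma torus_dist_commute: "torus_dist L x y = torus_dist L y x"
  unfolding torus_dist_def by (simp add: abs_minus_commute)

lemma hL_commute: "hL H tau alpha L x y = hL H tau alpha L y x"
  unfolding hL_def by (simp add: torus_dist_commute)

lemma prob_edge_pmf_isolated_vertex:
  assumes k: "k < n"
  shows "measure_pmf.prob (edge_pmf H tau alpha L n xs) {E. \<forall>j<n. j \<noteq> k \<longrightarrow> \<not> E (min k j, max k j)}
       = (\<Prod>j\<in>{..<n}-{k}. 1 - clamp01 (hL H tau alpha L (xs k) (xs j)))"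
proof -
  let ?S = "{(a, b). a < b \<and> b < n}"
  let ?p = "\<lambda>(a, b). bernoulli_pmf (hL H tau alpha L (xs a) (xs b))"
  define P where "P = (\<lambda>j. (min k j, max k j)) ` ({..<n}-{k})"
  define B where "B e = (if e \<in> P then {False} else UNIV)" for e :: "nat \<times> nat"
  have fin: "finite ?S"
    by (rule finite_subset[of _ "{..<n} \<times> {..<n}"]) auto
  have PS: "P \<subseteq> ?S" using k unfolding P_def by auto
  have "{E. \<forall>j<n. j \<noteq> k \<longrightarrow> \<not> E (min k j, max k j)} = Pi ?S B"
    using PS unfolding B_def P_def Pi_def by (auto split: if_splits)
  then have "measure_pmf.prob (edge_pmf H tau alpha L n xs) {E. \<forall>j<n. j \<noteq> k \<longrightarrow> \<not> E (min k j, max k j)}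
      = (\<Prod>e\<in>?S. measure_pmf.prob (?p e) (B e))"
    unfolding edge_pmf_def by (simp add: measure_Pi_pmf_Pi[OF fin])
  also have "\<dots> = (\<Prod>e\<in>P. measure_pmf.prob (?p e) {False})"
    by (rule sym, rule prod.mono_neutral_cong_left[OF fin PS]) (auto simp: B_def)
  also have "\<dots> = (\<Prod>j\<in>{..<n}-{k}. measure_pmf.prob (?p (min k j, max k j)) {False})"
    unfolding P_def by (subst prod.reindex) (auto simp: inj_on_def min_def max_def split: if_splits)
  also have "\<dots> = (\<Prod>j\<in>{..<n}-{k}. 1 - clamp01 (hL H tau alpha L (xs k) (xs j)))"
    by (intro prod.cong refl)
       (auto simp: measure_pmf_single pmf_bernoulli_False_clamp01 min_def max_def hL_commute)
  finally show ?thesis .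
qed

lemma prob_single_isolated_le:
  "measure_pmf.prob (edge_pmf H tau alpha L n xs) {E. single_isolated A n xs E}
   \<le> (\<Sum>k<n. indicator A (xs k) * (\<Prod>j\<in>{..<n}-{k}. 1 - clamp01 (hL H tau alpha L (xs k) (xs j))))"
proof -
  let ?P = "edge_pmf H tau alpha L n xs"
  define iso where "iso k = {E. \<forall>j<n. j \<noteq> k \<longrightarrow> \<not> E (min k j, max k j)}" for k
  define K where "K = {k. k < n \<and> xs k \<in> A}"
  have "measure_pmf.prob ?P {E. single_isolated A n xs E} \<le> measure_pmf.prob ?P (\<Union>k\<in>K. iso k)"
    by (rule measure_pmf.finite_measure_mono) (auto simp: single_isolated_def K_def iso_def)
  also have "\<dots> \<le> (\<Sum>k\<in>K. measure_pmf.prob ?P (iso k))"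
    by (rule measure_pmf.finite_measure_subadditive_finite) (auto simp: K_def)
  also have "\<dots> = (\<Sum>k<n. indicator A (xs k) * measure_pmf.prob ?P (iso k))"
    unfolding K_def by (rule sum.mono_neutral_cong_left) (auto simp: indicator_def)
  also have "\<dots> = (\<Sum>k<n. indicator A (xs k) * (\<Prod>j\<in>{..<n}-{k}. 1 - clamp01 (hL H tau alpha L (xs k) (xs j))))"
    unfolding iso_def by (intro sum.cong refl) (simp add: prob_edge_pmf_isolated_vertex)
  finally show ?thesis .
qed

section \<open>Integrals over the torus\<close>

lemma torus_dist_nonneg: "x \<in> {0..<L} \<Longrightarrow> y \<in> {0..<L} \<Longrightarrow> 0 \<le> torus_dist L x y"
  by (auto simp: torus_dist_def)

lemma torus_periodization:
  fixes g :: "real \<Rightarrow> 'a::comm_monoid_add"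
  assumes y: "y \<in> {0..<L}" and z: "z \<in> {0..<L}" and D: "D < L / 2" "\<And>s. D < s \<Longrightarrow> g s = 0"
  shows "g \<bar>z - y\<bar> + g \<bar>z - y + L\<bar> + g \<bar>z - y - L\<bar> = g (torus_dist L y z)"
proof (cases "0 \<le> z - y")
  case True
  then have "g \<bar>z - y + L\<bar> = 0" "\<bar>z - y - L\<bar> = L - (z - y)" using y z D by auto
  then show ?thesis
    using True D by (cases "z - y \<le> L / 2") (auto simp: torus_dist_def abs_minus_commute)
next
  case False
  then have "g \<bar>z - y - L\<bar> = 0" "\<bar>z - y + L\<bar> = L - (y - z)" using y z D by auto
  then show ?thesis
    using False D by (cases "y - z \<le> L / 2") (auto simp: torus_dist_def abs_minus_commute)
qed

lemma nn_integral_abs_le_torus: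
  fixes g :: "real \<Rightarrow> ennreal"
  assumes [measurable]: "g \<in> borel_measurable borel"
    and D: "D < L / 2" "\<And>s. D < s \<Longrightarrow> g s = 0" and y: "y \<in> {0..<L}"
  shows "(\<integral>\<^sup>+t. g \<bar>t\<bar> \<partial>lborel) \<le> (\<integral>\<^sup>+z. g (torus_dist L y z) * indicator {0..<L} z \<partial>lborel)"
proof -
  let ?T = "\<lambda>c t. g \<bar>t\<bar> * indicator {0..<L} (y - c + t)"
  have cover: "g \<bar>t\<bar> \<le> ?T 0 t + ?T L t + ?T (- L) t" for t
  proof (cases "\<bar>t\<bar> \<le> D")
    case True
    then show ?thesis using D y by (auto simp: indicator_def)
  qed (use D in simp)
  have shift: "(\<integral>\<^sup>+t. ?T c t \<partial>lborel) = (\<integral>\<^sup>+z. g \<bar>z - y + c\<bar> * indicator {0..<L} z \<partial>lborel)" for c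
    by (subst nn_integral_real_affine[where c=1 and t="y - c"]) (auto simp: algebra_simps)
  have "(\<integral>\<^sup>+t. g \<bar>t\<bar> \<partial>lborel) \<le> (\<integral>\<^sup>+t. ?T 0 t + ?T L t + ?T (- L) t \<partial>lborel)"
    by (intro nn_integral_mono cover)
  also have "\<dots> = (\<integral>\<^sup>+t. ?T 0 t \<partial>lborel) + (\<integral>\<^sup>+t. ?T L t \<partial>lborel) + (\<integral>\<^sup>+t. ?T (- L) t \<partial>lborel)"
    by (simp add: nn_integral_add)
  also have "\<dots> = (\<integral>\<^sup>+z. (g \<bar>z - y\<bar> + g \<bar>z - y + L\<bar> + g \<bar>z - y - L\<bar>) * indicator {0..<L} z \<partial>lborel)"
    unfolding shift by (simp add: nn_integral_add distrib_right)
  also have "\<dots> = (\<integral>\<^sup>+z. g (torus_dist L y z) * indicator {0..<L} z \<partial>lborel)"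
    using torus_periodization[of y L _ D g] y D by (intro nn_integral_cong) (simp add: indicator_def)
  finally show ?thesis .
qed

lemma nn_integral_abs_ge:
  fixes g :: "real \<Rightarrow> ennreal"
  assumes [measurable]: "g \<in> borel_measurable borel"
  shows "2 * (\<integral>\<^sup>+s. g s * indicator {0<..} s \<partial>lborel) \<le> (\<integral>\<^sup>+t. g \<bar>t\<bar> \<partial>lborel)"
proof -
  have "(\<integral>\<^sup>+t. g (- t) * indicator {0<..} (- t) \<partial>lborel) = (\<integral>\<^sup>+s. g s * indicator {0<..} s \<partial>lborel)"
    by (subst nn_integral_real_affine[where c="-1" and t=0]) auto
  then have "2 * (\<integral>\<^sup>+s. g s * indicator {0<..} s \<partial>lborel)
      = (\<integral>\<^sup>+t. g t * indicator {0<..} t + g (- t) * indicator {0<..} (- t) \<partial>lborel)"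
    by (simp add: nn_integral_add mult_2)
  also have "\<dots> \<le> (\<integral>\<^sup>+t. g \<bar>t\<bar> \<partial>lborel)"
    by (intro nn_integral_mono) (auto simp: indicator_def)
  finally show ?thesis .
qed

text \<open>The factor \<^term>\<open>indicator {0..} s\<close> makes the profile measurable and [0, 1]-valued on the
  whole line, although H is only controlled on [0, \<infinity>).\<close>

definition conn_profile :: "(real \<Rightarrow> real) \<Rightarrow> real \<Rightarrow> real \<Rightarrow> nat \<Rightarrow> real \<Rightarrow> real" where
  "conn_profile H tau alpha L s =
     indicator {0..} s * H (s / RL H tau L) * (if s \<le> RL H tau L powr (1 + 1 / alpha) then 1 else 0)"

lemma hL_eq_conn_profile:
  "0 \<le> torus_dist (real L) x y \<Longrightarrow>
   hL H tau alpha L x y = conn_profile H tau alpha L (torus_dist (real L) x y)"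
  by (simp add: hL_def conn_profile_def)

lemma conn_profile_vanishes:
  "RL H tau L powr (1 + 1 / alpha) < s \<Longrightarrow> conn_profile H tau alpha L s = 0"
  by (simp add: conn_profile_def)

context
  fixes H :: "real \<Rightarrow> real" and tau alpha :: real and L :: nat
  assumes H_meas: "set_borel_measurable borel {0..} H"
    and H_bounds: "\<forall>x\<ge>0. 0 \<le> H x \<and> H x \<le> 1"
    and RL_pos: "RL H tau L > 0"
begin

lemma conn_profile_bounds: "0 \<le> conn_profile H tau alpha L s" "conn_profile H tau alpha L s \<le> 1"
  using H_bounds RL_pos by (auto simp: conn_profile_def indicator_def)

lemma conn_profile_measurable [measurable]: "conn_profile H tau alpha L \<in> borel_measurable borel"
proof -
  have [measurable]: "(\<lambda>x. indicator {0..} x * H x) \<in> borel_measurable borel"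
    using H_meas by (simp add: set_borel_measurable_def)
  have "conn_profile H tau alpha L = (\<lambda>s. indicator {0..} (s / RL H tau L) * H (s / RL H tau L) *
      (if s \<le> RL H tau L powr (1 + 1 / alpha) then 1 else 0))"
    using RL_pos by (auto simp: conn_profile_def indicator_def fun_eq_iff zero_le_divide_iff)
  also have "\<dots> \<in> borel_measurable borel"
    by measurable
  finally show ?thesis .
qed

lemma nn_integral_conn_profile_ge:
  "ennreal (2 * RL H tau L) * (\<integral>\<^sup>+u. ennreal (H u * indicator {0<..RL H tau L powr (1 / alpha)} u) \<partial>lborel)
   \<le> (\<integral>\<^sup>+t. ennreal (conn_profile H tau alpha L \<bar>t\<bar>) \<partial>lborel)"
proof -
  define R where "R = RL H tau L"
  have R: "R > 0" using RL_pos by (simp add: R_def)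
  have "(\<integral>\<^sup>+s. ennreal (conn_profile H tau alpha L s) * indicator {0<..} s \<partial>lborel)
      = ennreal R * (\<integral>\<^sup>+u. ennreal (conn_profile H tau alpha L (0 + R * u)) * indicator {0<..} (0 + R * u) \<partial>lborel)"
    using R by (subst nn_integral_real_affine[where c=R and t=0]) auto
  also have "(\<lambda>u. ennreal (conn_profile H tau alpha L (0 + R * u)) * indicator {0<..} (0 + R * u))
      = (\<lambda>u. ennreal (H u * indicator {0<..R powr (1 / alpha)} u))"
    using R by (auto simp: fun_eq_iff conn_profile_def R_def[symmetric] indicator_def powr_add
        zero_less_mult_iff field_simps)
  finally have "2 * ennreal R * (\<integral>\<^sup>+u. ennreal (H u * indicator {0<..R powr (1 / alpha)} u) \<partial>lborel)
      = 2 * (\<integral>\<^sup>+s. ennreal (conn_profile H tau alpha L s) * indicator {0<..} s \<partial>lborel)"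
    by (simp add: mult.assoc)
  also have "\<dots> \<le> (\<integral>\<^sup>+t. ennreal (conn_profile H tau alpha L \<bar>t\<bar>) \<partial>lborel)"
    by (rule nn_integral_abs_ge) measurable
  finally show ?thesis
    using R by (simp add: R_def ennreal_mult)
qed

end

section \<open>Averaging over the node positions\<close>

lemma nn_integral_PiM_indicator_prod_le:
  fixes M :: "'a measure" and W :: "'a \<Rightarrow> 'a \<Rightarrow> real"
  assumes "sigma_finite_measure M"
    and W_meas: "case_prod W \<in> borel_measurable (M \<Otimes>\<^sub>M M)"
    and W_nonneg: "\<And>y z. 0 \<le> W y z" and A[measurable]: "A \<in> sets M" and k: "k < n"
    and W_int: "\<And>y. y \<in> A \<Longrightarrow> (\<integral>\<^sup>+z. ennreal (W y z) \<partial>M) \<le> ennreal q" and q: "0 \<le> q"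
  shows "(\<integral>\<^sup>+xs. ennreal (indicator A (xs k) * (\<Prod>j\<in>{..<n}-{k}. W (xs k) (xs j))) \<partial>PiM {..<n} (\<lambda>_. M))
     \<le> ennreal (q ^ (n - 1)) * emeasure M A"
proof -
  interpret P: product_sigma_finite "\<lambda>_. M"
    using assms(1) by (simp add: product_sigma_finite_def)
  have [measurable]: "(\<lambda>x. W (f x) (g x)) \<in> borel_measurable N"
    if "f \<in> measurable N M" "g \<in> measurable N M" for f g N
    using measurable_compose[OF measurable_Pair[OF that] W_meas] by simp
  define I where "I = {..<n} - {k}"
  have n: "{..<n} = insert k I" and kI: "k \<notin> I" and I: "finite I" "card I = n - 1"
    using k by (auto simp: I_def)
  have "(\<integral>\<^sup>+xs. ennreal (indicator A (xs k) * (\<Prod>j\<in>I. W (xs k) (xs j))) \<partial>PiM (insert k I) (\<lambda>_. M))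
      = (\<integral>\<^sup>+y. (\<integral>\<^sup>+x. indicator A y * (\<Prod>j\<in>I. ennreal (W y (x j))) \<partial>PiM I (\<lambda>_. M)) \<partial>M)"
    using kI W_nonneg
    by (subst P.product_nn_integral_insert_rev[OF I(1) kI], measurable)
       (auto simp: ennreal_mult' prod_ennreal prod_nonneg indicator_def intro!: nn_integral_cong prod.cong)
  also have "\<dots> = (\<integral>\<^sup>+y. indicator A y * (\<Prod>j\<in>I. (\<integral>\<^sup>+z. ennreal (W y z) \<partial>M)) \<partial>M)"
  proof (intro nn_integral_cong)
    fix y assume "y \<in> space M"
    then have [measurable]: "W y \<in> borel_measurable M"
      using measurable_Pair2[OF W_meas] by simp
    have "(\<integral>\<^sup>+x. indicator A y * (\<Prod>j\<in>I. ennreal (W y (x j))) \<partial>PiM I (\<lambda>_. M))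
        = indicator A y * (\<integral>\<^sup>+x. (\<Prod>j\<in>I. ennreal (W y (x j))) \<partial>PiM I (\<lambda>_. M))"
      by (rule nn_integral_cmult) measurable
    also have "(\<integral>\<^sup>+x. (\<Prod>j\<in>I. ennreal (W y (x j))) \<partial>PiM I (\<lambda>_. M)) = (\<Prod>j\<in>I. (\<integral>\<^sup>+z. ennreal (W y z) \<partial>M))"
      by (rule P.product_nn_integral_prod[OF I(1)]) measurable
    finally show "(\<integral>\<^sup>+x. indicator A y * (\<Prod>j\<in>I. ennreal (W y (x j))) \<partial>PiM I (\<lambda>_. M))
        = indicator A y * (\<Prod>j\<in>I. (\<integral>\<^sup>+z. ennreal (W y z) \<partial>M))" .
  qed
  also have "\<dots> \<le> (\<integral>\<^sup>+y. ennreal (q ^ (n - 1)) * indicator A y \<partial>M)"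
  proof (intro nn_integral_mono)
    fix y
    have "y \<in> A \<Longrightarrow> (\<Prod>j\<in>I. (\<integral>\<^sup>+z. ennreal (W y z) \<partial>M)) \<le> ennreal (q ^ (n - 1))"
      using prod_mono_ennreal[of I "\<lambda>_. (\<integral>\<^sup>+z. ennreal (W y z) \<partial>M)" "\<lambda>_. ennreal q"] W_int q I
      by (simp add: ennreal_power)
    then show "indicator A y * (\<Prod>j\<in>I. (\<integral>\<^sup>+z. ennreal (W y z) \<partial>M)) \<le> ennreal (q ^ (n - 1)) * indicator A y"
      by (cases "y \<in> A") auto
  qed
  also have "\<dots> = ennreal (q ^ (n - 1)) * emeasure M A"
    by (simp add: nn_integral_cmult_indicator)
  finally show ?thesis
    unfolding I_def[symmetric] unfolding n .
qed

lemma nn_integral_PiM_sum_indicator_prod_le: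
  fixes M :: "'a measure" and W :: "'a \<Rightarrow> 'a \<Rightarrow> real"
  assumes M: "sigma_finite_measure M"
    and W_meas: "case_prod W \<in> borel_measurable (M \<Otimes>\<^sub>M M)"
    and W_nonneg: "\<And>y z. 0 \<le> W y z" and A[measurable]: "A \<in> sets M"
    and W_int: "\<And>y. y \<in> A \<Longrightarrow> (\<integral>\<^sup>+z. ennreal (W y z) \<partial>M) \<le> ennreal q" and q: "0 \<le> q"
  shows "(\<integral>\<^sup>+xs. ennreal (\<Sum>k<n. indicator A (xs k) * (\<Prod>j\<in>{..<n}-{k}. W (xs k) (xs j)))
      \<partial>PiM {..<n} (\<lambda>_. M)) \<le> ennreal (real n * q ^ (n - 1)) * emeasure M A"
proof -
  have [measurable]: "(\<lambda>x. W (f x) (g x)) \<in> borel_measurable N"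
    if "f \<in> measurable N M" "g \<in> measurable N M" for f g N
    using measurable_compose[OF measurable_Pair[OF that] W_meas] by simp
  have "(\<integral>\<^sup>+xs. ennreal (\<Sum>k<n. indicator A (xs k) * (\<Prod>j\<in>{..<n}-{k}. W (xs k) (xs j))) \<partial>PiM {..<n} (\<lambda>_. M))
      = (\<integral>\<^sup>+xs. (\<Sum>k<n. ennreal (indicator A (xs k) * (\<Prod>j\<in>{..<n}-{k}. W (xs k) (xs j)))) \<partial>PiM {..<n} (\<lambda>_. M))"
    using W_nonneg by (intro nn_integral_cong sum_ennreal[symmetric]) (simp add: prod_nonneg)
  also have "\<dots> = (\<Sum>k<n. \<integral>\<^sup>+xs. ennreal (indicator A (xs k) * (\<Prod>j\<in>{..<n}-{k}. W (xs k) (xs j)))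
      \<partial>PiM {..<n} (\<lambda>_. M))"
  proof (rule nn_integral_sum)
    fix k assume "k \<in> {..<n}"
    then show "(\<lambda>xs. ennreal (indicator A (xs k) * (\<Prod>j\<in>{..<n}-{k}. W (xs k) (xs j))))
        \<in> borel_measurable (PiM {..<n} (\<lambda>_. M))"
      by measurable
  qed
  also have "\<dots> \<le> (\<Sum>k<n. ennreal (q ^ (n - 1)) * emeasure M A)"
    by (intro sum_mono nn_integral_PiM_indicator_prod_le[OF M W_meas W_nonneg A _ W_int q]) auto
  also have "\<dots> = ennreal (real n * q ^ (n - 1)) * emeasure M A"
    using q by (simp add: ennreal_mult ennreal_of_nat_eq_real_of_nat mult.assoc)
  finally show ?thesis .
qed

lemma nn_integral_uniform_one_minus_le:
  fixes g :: "real \<Rightarrow> real"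
  assumes L: "L > 0" and [measurable]: "g \<in> borel_measurable borel" and g: "\<And>z. 0 \<le> g z \<and> g z \<le> 1"
    and G: "ennreal G \<le> (\<integral>\<^sup>+z. ennreal (g z * indicator {0..<L} z) \<partial>lborel)" "0 \<le> G"
  shows "(\<integral>\<^sup>+z. ennreal (1 - g z * indicator {0..<L} z) \<partial>uniform_measure lborel {0..<L})
      \<le> ennreal (1 - G / L)" and "G \<le> L"
proof -
  define a where "a = (\<integral>\<^sup>+z. ennreal ((1 - g z) * indicator {0..<L} z) \<partial>lborel)"
  have "a + (\<integral>\<^sup>+z. ennreal (g z * indicator {0..<L} z) \<partial>lborel)
      = (\<integral>\<^sup>+z. ennreal ((1 - g z) * indicator {0..<L} z) + ennreal (g z * indicator {0..<L} z) \<partial>lborel)"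
    unfolding a_def by (rule nn_integral_add[symmetric]) auto
  also have "\<dots> = (\<integral>\<^sup>+z. indicator {0..<L} z \<partial>lborel)"
    using g by (intro nn_integral_cong) (auto simp: indicator_def simp flip: ennreal_plus)
  also have "\<dots> = ennreal L"
    using L by simp
  finally have "a + ennreal G \<le> ennreal L"
    using G(1) by (metis add_left_mono)
  then obtain a' where a': "a = ennreal a'" "0 \<le> a'" "a' + G \<le> L"
    using G(2) L by (cases a) (auto simp: top_unique simp flip: ennreal_plus)
  then show "G \<le> L" by simp
  have "(\<integral>\<^sup>+z. ennreal (1 - g z * indicator {0..<L} z) \<partial>uniform_measure lborel {0..<L})
      = (\<integral>\<^sup>+z. ennreal (1 - g z * indicator {0..<L} z) * indicator {0..<L} z \<partial>lborel) / emeasure lborel {0..<L}"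
    by (rule nn_integral_uniform_measure) auto
  also have "(\<lambda>z. ennreal (1 - g z * indicator {0..<L} z) * indicator {0..<L} z)
      = (\<lambda>z. ennreal ((1 - g z) * indicator {0..<L} z))"
    by (auto simp: fun_eq_iff indicator_def)
  also have "emeasure lborel {0..<L} = ennreal L"
    using L by simp
  also have "(\<integral>\<^sup>+z. ennreal ((1 - g z) * indicator {0..<L} z) \<partial>lborel) / ennreal L = ennreal (a' / L)"
    using a' L by (simp add: a_def divide_ennreal)
  also have "\<dots> \<le> ennreal (1 - G / L)"
    using a' L by (intro ennreal_leI) (simp add: field_simps)
  finally show "(\<integral>\<^sup>+z. ennreal (1 - g z * indicator {0..<L} z) \<partial>uniform_measure lborel {0..<L})
      \<le> ennreal (1 - G / L)" .
qed

lemma nn_integral_uniform_torus_no_edge_le: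
  fixes phi :: "real \<Rightarrow> real"
  assumes L: "L > 0"
    and [measurable]: "phi \<in> borel_measurable borel" and phi: "\<And>s. 0 \<le> phi s \<and> phi s \<le> 1"
    and D: "D < L / 2" "\<And>s. D < s \<Longrightarrow> phi s = 0"
    and G: "ennreal G \<le> (\<integral>\<^sup>+t. ennreal (phi \<bar>t\<bar>) \<partial>lborel)" "0 \<le> G" and y: "y \<in> {0..<L}"
  shows "(\<integral>\<^sup>+z. ennreal (1 - phi (torus_dist L y z) * indicator {0..<L} z) \<partial>uniform_measure lborel {0..<L})
      \<le> ennreal (1 - G / L)" and "G \<le> L"
proof -
  have "(\<integral>\<^sup>+t. ennreal (phi \<bar>t\<bar>) \<partial>lborel)
      \<le> (\<integral>\<^sup>+z. ennreal (phi (torus_dist L y z)) * indicator {0..<L} z \<partial>lborel)"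
    using D y by (intro nn_integral_abs_le_torus) auto
  also have "\<dots> = (\<integral>\<^sup>+z. ennreal (phi (torus_dist L y z) * indicator {0..<L} z) \<partial>lborel)"
    by (intro nn_integral_cong) (simp add: indicator_def)
  finally have "ennreal G \<le> \<dots>"
    by (rule order.trans[OF G(1)])
  moreover have "(\<lambda>z. phi (torus_dist L y z)) \<in> borel_measurable borel"
    unfolding torus_dist_def by measurable
  ultimately show "(\<integral>\<^sup>+z. ennreal (1 - phi (torus_dist L y z) * indicator {0..<L} z) \<partial>uniform_measure lborel {0..<L})
      \<le> ennreal (1 - G / L)" and "G \<le> L"
    using nn_integral_uniform_one_minus_le[OF L _ _ _ G(2)] phi by simp_all
qed

lemma prob_single_isolated_le_profile:
  fixes phi :: "real \<Rightarrow> real"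
  assumes phi: "\<And>s. 0 \<le> phi s \<and> phi s \<le> 1"
    and hL_phi: "\<And>x y. x \<in> {0..<real L} \<Longrightarrow> y \<in> {0..<real L} \<Longrightarrow>
      hL H tau alpha L x y = phi (torus_dist (real L) x y)"
    and A: "A \<subseteq> {0..<real L}"
  shows "measure_pmf.prob (edge_pmf H tau alpha L n xs) {E. single_isolated A n xs E}
    \<le> (\<Sum>k<n. indicator A (xs k) *
          (\<Prod>j\<in>{..<n}-{k}. 1 - phi (torus_dist (real L) (xs k) (xs j)) * indicator {0..<real L} (xs j)))"
proof -
  have "1 - clamp01 (hL H tau alpha L (xs k) (xs j))
      \<le> 1 - phi (torus_dist (real L) (xs k) (xs j)) * indicator {0..<real L} (xs j)"
    if "xs k \<in> A" for k j
  proof (cases "xs j \<in> {0..<real L}")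
    case True
    then show ?thesis
      using that A hL_phi phi by (auto simp: clamp01_def)
  qed (simp add: clamp01_bounds)
  then have "(\<Sum>k<n. indicator A (xs k) * (\<Prod>j\<in>{..<n}-{k}. 1 - clamp01 (hL H tau alpha L (xs k) (xs j))))
      \<le> (\<Sum>k<n. indicator A (xs k) *
          (\<Prod>j\<in>{..<n}-{k}. 1 - phi (torus_dist (real L) (xs k) (xs j)) * indicator {0..<real L} (xs j)))"
    by (intro sum_mono) (auto simp: indicator_def clamp01_bounds intro!: prod_mono)
  with prob_single_isolated_le show ?thesis
    by (rule order.trans)
qed

lemma integral_prob_single_isolated_le:
  fixes phi :: "real \<Rightarrow> real" and A :: "real set"
  assumes L: "L > 0"
    and [measurable]: "phi \<in> borel_measurable borel" and phi: "\<And>s. 0 \<le> phi s \<and> phi s \<le> 1"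
    and D: "D < real L / 2" "\<And>s. D < s \<Longrightarrow> phi s = 0"
    and hL_phi: "\<And>x y. x \<in> {0..<real L} \<Longrightarrow> y \<in> {0..<real L} \<Longrightarrow>
      hL H tau alpha L x y = phi (torus_dist (real L) x y)"
    and G: "ennreal G \<le> (\<integral>\<^sup>+t. ennreal (phi \<bar>t\<bar>) \<partial>lborel)" "0 \<le> G"
    and A[measurable]: "A \<in> sets borel" and A_sub: "A \<subseteq> {0..<real L}"
    and A_meas: "emeasure lborel A = ennreal a" "0 \<le> a"
  shows "(\<integral>xs. measure_pmf.prob (edge_pmf H tau alpha L n xs) {E. single_isolated A n xs E} \<partial>point_positions L n)
         \<le> real n * ((1 - G / real L) ^ (n - 1) * (a / real L))"
proof -
  define M where "M = uniform_measure lborel {0..<real L}"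
  define q where "q = 1 - G / real L"
  \<comment> \<open>W is 1 off the torus, so it dominates the no-edge probabilities everywhere and no
    almost-everywhere argument over the product measure is needed.\<close>
  define W where "W y z = 1 - phi (torus_dist (real L) y z) * indicator {0..<real L} z" for y z
  have sets_M [measurable_cong]: "sets M = sets borel" and "prob_space M"
    using L by (auto simp: M_def intro!: prob_space_uniform_measure)
  then have M: "sigma_finite_measure M"
    by (simp add: prob_space_imp_sigma_finite)
  have W_meas: "case_prod W \<in> borel_measurable (M \<Otimes>\<^sub>M M)"
    unfolding W_def torus_dist_def by measurable
  have W_nonneg: "0 \<le> W y z" for y z
    using phi by (simp add: W_def indicator_def)
  note no_edge = nn_integral_uniform_torus_no_edge_le[of "real L" phi D G, OF _ _ phi D G]
  have W_int: "(\<integral>\<^sup>+z. ennreal (W y z) \<partial>M) \<le> ennreal q" if "y \<in> A" for y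
    using no_edge(1) that A_sub L by (auto simp: M_def W_def q_def)
  have q: "0 \<le> q"
    using no_edge(2)[of 0] L by (simp add: q_def)
  have "(\<integral>\<^sup>+xs. ennreal (measure_pmf.prob (edge_pmf H tau alpha L n xs) {E. single_isolated A n xs E})
          \<partial>PiM {..<n} (\<lambda>_. M))
      \<le> (\<integral>\<^sup>+xs. ennreal (\<Sum>k<n. indicator A (xs k) * (\<Prod>j\<in>{..<n}-{k}. W (xs k) (xs j))) \<partial>PiM {..<n} (\<lambda>_. M))"
    using prob_single_isolated_le_profile[OF phi hL_phi A_sub]
    by (intro nn_integral_mono ennreal_leI) (simp add: W_def)
  also have "\<dots> \<le> ennreal (real n * q ^ (n - 1)) * emeasure M A"
    by (intro nn_integral_PiM_sum_indicator_prod_le[OF M W_meas W_nonneg _ W_int q]) simp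
  also have "\<dots> = ennreal (real n * (q ^ (n - 1) * (a / real L)))"
    using A_sub A_meas L q
    by (simp add: M_def emeasure_uniform_measure Int_absorb1 divide_ennreal flip: ennreal_mult)
  finally show ?thesis
    unfolding point_positions_def M_def[symmetric] q_def[symmetric]
    by (intro integral_real_bounded) (use q A_meas(2) in simp_all)
qed

section \<open>Poisson mixing\<close>

lemma poisson_pgf_deriv_sums:
  fixes mu q :: real
  assumes mu: "mu > 0"
  shows "(\<lambda>n. pmf (poisson_pmf mu) n * (real n * q ^ (n - 1))) sums (mu * exp (- mu * (1 - q)))"
proof -
  have "(\<lambda>k. mu * exp (- mu) * ((mu * q) ^ k /\<^sub>R fact k)) sums (mu * exp (- mu) * exp (mu * q))"
    by (intro sums_mult exp_converges)
  moreover have "pmf (poisson_pmf mu) (Suc k) * (real (Suc k) * q ^ (Suc k - 1))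
      = mu * exp (- mu) * ((mu * q) ^ k /\<^sub>R fact k)" for k
    using mu by (simp add: pmf_poisson power_mult_distrib field_simps del: of_nat_Suc)
  moreover have "mu * exp (- mu) * exp (mu * q) = mu * exp (- mu * (1 - q))"
    by (simp add: exp_add[symmetric] algebra_simps)
  ultimately have "(\<lambda>k. pmf (poisson_pmf mu) (Suc k) * (real (Suc k) * q ^ (Suc k - 1)))
      sums (mu * exp (- mu * (1 - q)))"
    by simp
  then show ?thesis
    by (subst (asm) sums_Suc_iff) simp
qed

lemma seg_subset: "m > 0 \<Longrightarrow> i \<in> Gamma_idx m L \<Longrightarrow> seg m i \<subseteq> {0..<real L}"
  by (auto simp: seg_def Gamma_idx_def field_simps simp flip: of_nat_mult)

lemma emeasure_seg: "m > 0 \<Longrightarrow> emeasure lborel (seg m i) = ennreal (1 / real m)"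
  by (simp add: seg_def diff_divide_distrib divide_right_mono)

lemma p_iso_le:
  fixes phi :: "real \<Rightarrow> real"
  assumes L: "L > 0" and m: "m > 0" and i: "i \<in> Gamma_idx m L"
    and [measurable]: "phi \<in> borel_measurable borel" and phi: "\<And>s. 0 \<le> phi s \<and> phi s \<le> 1"
    and D: "D < real L / 2" "\<And>s. D < s \<Longrightarrow> phi s = 0"
    and hL_phi: "\<And>x y. x \<in> {0..<real L} \<Longrightarrow> y \<in> {0..<real L} \<Longrightarrow>
      hL H tau alpha L x y = phi (torus_dist (real L) x y)"
    and G: "ennreal G \<le> (\<integral>\<^sup>+t. ennreal (phi \<bar>t\<bar>) \<partial>lborel)" "0 \<le> G"
  shows "p_iso H tau alpha m L i \<le> exp (- G) / real m" and "0 \<le> p_iso H tau alpha m L i"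
proof -
  define t where "t n = pmf (poisson_pmf (real L)) n *
    (\<integral>xs. measure_pmf.prob (edge_pmf H tau alpha L n xs) {E. single_isolated (seg m i) n xs E}
      \<partial>point_positions L n)" for n
  define b where "b n = pmf (poisson_pmf (real L)) n * (real n * (1 - G / real L) ^ (n - 1)) *
    (1 / real m / real L)" for n
  have "b sums (real L * exp (- real L * (1 - (1 - G / real L))) * (1 / real m / real L))"
    unfolding b_def using L by (intro sums_mult2 poisson_pgf_deriv_sums) simp
  then have b_sums: "b sums (exp (- G) / real m)"
    using L by simp
  have t_nonneg: "0 \<le> t n" for n
    by (simp add: t_def)
  have t_le_b: "t n \<le> b n" for n
    unfolding t_def b_def mult.assoc
    using integral_prob_single_isolated_le[OF L _ phi D hL_phi G _ seg_subset[OF m i] emeasure_seg[OF m]]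
    by (intro mult_left_mono) (simp_all add: seg_def)
  have "summable t"
    by (rule summable_comparison_test'[OF sums_summable[OF b_sums]]) (use t_nonneg t_le_b in auto)
  with t_le_b have "suminf t \<le> suminf b"
    using b_sums by (intro suminf_le) (auto simp: sums_iff)
  with \<open>summable t\<close> show "p_iso H tau alpha m L i \<le> exp (- G) / real m" and "0 \<le> p_iso H tau alpha m L i"
    using b_sums t_nonneg by (simp_all add: p_iso_def t_def[symmetric] sums_iff suminf_nonneg)
qed

section \<open>Bounding b_1\<close>

lemma centre_bounds:
  assumes "m > 0" "j \<in> Gamma_idx m L"
  shows "0 \<le> centre m j \<and> centre m j \<le> real L"
proof -
  have "real j \<le> real m * real L"
    using assms by (simp add: Gamma_idx_def flip: of_nat_mult)
  then show ?thesis
    using assms by (auto simp: centre_def Gamma_idx_def field_simps)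
qed

lemma card_centres_in_interval_le:
  fixes S :: "nat set" and a b :: real
  assumes S: "finite S" and m: "m > 0" and centres: "\<And>j. j \<in> S \<Longrightarrow> a \<le> centre m j \<and> centre m j \<le> b"
  shows "real (card S) \<le> real m * max 0 (b - a) + 1"
proof (cases "S = {}")
  case False
  define lo hi where "lo = Min S" and "hi = Max S"
  have lo_hi: "lo \<in> S" "hi \<in> S" "S \<subseteq> {lo..hi}"
    using False S by (auto simp: lo_def hi_def)
  then have "real (card S) \<le> real hi - real lo + 1"
    using card_mono[of "{lo..hi}" S] by auto
  moreover have "(real hi - real lo) / real m \<le> b - a"
    using centres[OF lo_hi(1)] centres[OF lo_hi(2)] by (simp add: centre_def diff_divide_distrib)
  then have "real hi - real lo \<le> real m * (b - a)"
    using m by (simp add: divide_le_eq mult.commute)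
  also have "\<dots> \<le> real m * max 0 (b - a)"
    by (intro mult_left_mono) auto
  ultimately show ?thesis by linarith
qed (use m in simp)

lemma card_B_idx_le:
  assumes m: "m > 0" and i: "i \<in> Gamma_idx m L"
  shows "real (card (B_idx H tau alpha m L i)) \<le> 12 * RL H tau L powr (1 + 1 / alpha) * real m + 3"
proof -
  define E where "E = 3 * RL H tau L powr (1 + 1 / alpha)"
  define c where "c = centre m"
  define Idx where "Idx = Gamma_idx m L"
  have E: "0 \<le> E" by (simp add: E_def)
  have c: "0 \<le> c j \<and> c j \<le> real L" if "j \<in> Idx" for j
    using centre_bounds[OF m] that by (simp add: c_def Idx_def)
  define S1 where "S1 = {j\<in>Idx. c i - E \<le> c j \<and> c j \<le> c i + E}"
  define S2 where "S2 = {j\<in>Idx. c i + real L - E \<le> c j \<and> c j \<le> real L}"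
  define S3 where "S3 = {j\<in>Idx. 0 \<le> c j \<and> c j \<le> c i - real L + E}"
  have fin: "finite S1" "finite S2" "finite S3"
    by (simp_all add: S1_def S2_def S3_def Idx_def Gamma_idx_def)
  have i_Idx: "i \<in> Idx" using i by (simp add: Idx_def)
  have "B_idx H tau alpha m L i \<subseteq> S1 \<union> S2 \<union> S3"
  proof
    fix j assume "j \<in> B_idx H tau alpha m L i"
    then have j: "j \<in> Idx" and "torus_dist (real L) (c i) (c j) \<le> E"
      by (auto simp: B_idx_def Idx_def c_def E_def)
    then have "\<bar>c i - c j\<bar> \<le> E \<or> real L - \<bar>c i - c j\<bar> \<le> E"
      by (auto simp: torus_dist_def)
    then show "j \<in> S1 \<union> S2 \<union> S3"
      using j c[OF j] by (cases "c j \<ge> c i") (auto simp: S1_def S2_def S3_def)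
  qed
  then have "card (B_idx H tau alpha m L i) \<le> card S1 + card S2 + card S3"
    using fin by (meson card_Un_le card_mono finite_UnI add_le_mono1 order_trans)
  moreover have "real (card S1) \<le> real m * max 0 (c i + E - (c i - E)) + 1"
    by (rule card_centres_in_interval_le[OF fin(1) m]) (auto simp: S1_def c_def)
  moreover have "real (card S2) \<le> real m * max 0 (real L - (c i + real L - E)) + 1"
    by (rule card_centres_in_interval_le[OF fin(2) m]) (auto simp: S2_def c_def)
  moreover have "real (card S3) \<le> real m * max 0 (c i - real L + E - 0) + 1"
    by (rule card_centres_in_interval_le[OF fin(3) m]) (auto simp: S3_def c_def)
  moreover have "real m * max 0 (c i + E - (c i - E)) = 2 * (real m * E)"
    using E by simp
  moreover have "real m * max 0 (real L - (c i + real L - E)) \<le> real m * E"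
    and "real m * max 0 (c i - real L + E - 0) \<le> real m * E"
    using E c[OF i_Idx] by (auto intro!: mult_left_mono)
  ultimately have "real (card (B_idx H tau alpha m L i)) \<le> 4 * (real m * E) + 3"
    by linarith
  then show ?thesis
    by (simp add: E_def algebra_simps)
qed

lemma b1_le_square_bound:
  assumes m: "m > 0"
    and p: "\<And>i. i \<in> Gamma_idx m L \<Longrightarrow> 0 \<le> p_iso H tau alpha m L i \<and> p_iso H tau alpha m L i \<le> P"
  shows "0 \<le> b1 H tau alpha m L"
    and "b1 H tau alpha m L \<le> real m * real L * (12 * RL H tau L powr (1 + 1 / alpha) * real m + 3) * P\<^sup>2"
proof -
  have B_sub: "B_idx H tau alpha m L i \<subseteq> Gamma_idx m L" for i
    by (auto simp: B_idx_def)
  then show "0 \<le> b1 H tau alpha m L"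
    using p unfolding b1_def by (intro sum_nonneg mult_nonneg_nonneg) auto
  have "b1 H tau alpha m L \<le> (\<Sum>i\<in>Gamma_idx m L. \<Sum>j\<in>B_idx H tau alpha m L i. P * P)"
    unfolding b1_def
  proof (intro sum_mono)
    fix i j assume i: "i \<in> Gamma_idx m L" and "j \<in> B_idx H tau alpha m L i"
    then have j: "j \<in> Gamma_idx m L" using B_sub by blast
    show "p_iso H tau alpha m L i * p_iso H tau alpha m L j \<le> P * P"
      using p[OF i] p[OF j] by (intro mult_mono) auto
  qed
  also have "\<dots> = (\<Sum>i\<in>Gamma_idx m L. real (card (B_idx H tau alpha m L i)) * P\<^sup>2)"
    by (simp add: power2_eq_square)
  also have "\<dots> \<le> (\<Sum>i\<in>Gamma_idx m L. (12 * RL H tau L powr (1 + 1 / alpha) * real m + 3) * P\<^sup>2)"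
    using card_B_idx_le[OF m] by (intro sum_mono mult_right_mono) auto
  also have "\<dots> = real m * real L * (12 * RL H tau L powr (1 + 1 / alpha) * real m + 3) * P\<^sup>2"
    by (simp add: Gamma_idx_def)
  finally show "b1 H tau alpha m L \<le> real m * real L * (12 * RL H tau L powr (1 + 1 / alpha) * real m + 3) * P\<^sup>2" .
qed

lemma b1_le_exp:
  fixes H :: "real \<Rightarrow> real" and G :: real
  assumes H_meas: "set_borel_measurable borel {0..} H" and H_bounds: "\<forall>x\<ge>0. 0 \<le> H x \<and> H x \<le> 1"
    and L: "L > 0" and m: "m > 0" and R: "RL H tau L > 0"
    and D: "RL H tau L powr (1 + 1 / alpha) < real L / 2"
    and G: "ennreal G \<le> (\<integral>\<^sup>+t. ennreal (conn_profile H tau alpha L \<bar>t\<bar>) \<partial>lborel)" "0 \<le> G"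
  shows "0 \<le> b1 H tau alpha m L"
    and "b1 H tau alpha m L \<le> real L * (12 * RL H tau L powr (1 + 1 / alpha) + 3) * exp (- 2 * G)"
proof -
  note profile = conn_profile_measurable[OF H_meas H_bounds R] conn_profile_bounds[OF H_meas H_bounds R]
  have "0 \<le> p_iso H tau alpha m L i \<and> p_iso H tau alpha m L i \<le> exp (- G) / real m"
    if "i \<in> Gamma_idx m L" for i
    using p_iso_le[OF L m that profile(1) _ D conn_profile_vanishes _ G] profile(2,3)
    by (simp add: hL_eq_conn_profile torus_dist_nonneg)
  note b1 = b1_le_square_bound[OF m this]
  then show "0 \<le> b1 H tau alpha m L" by simp
  have "b1 H tau alpha m L
      \<le> real m * real L * (12 * RL H tau L powr (1 + 1 / alpha) * real m + 3) * (exp (- G) / real m)\<^sup>2"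
    using b1(2) by simp
  also have "\<dots> = real L * (12 * RL H tau L powr (1 + 1 / alpha) + 3 / real m) * (exp (- G))\<^sup>2"
    using m by (simp add: field_simps power2_eq_square)
  also have "\<dots> \<le> real L * (12 * RL H tau L powr (1 + 1 / alpha) + 3) * (exp (- G))\<^sup>2"
    using m by (intro mult_right_mono mult_left_mono add_left_mono) (auto simp: field_simps)
  finally show "b1 H tau alpha m L \<le> real L * (12 * RL H tau L powr (1 + 1 / alpha) + 3) * exp (- 2 * G)"
    by (simp add: power2_eq_square flip: exp_add)
qed

lemma b1_le_decay:
  fixes H :: "real \<Rightarrow> real"
  assumes H_meas: "set_borel_measurable borel {0..} H" and H_bounds: "\<forall>x\<ge>0. 0 \<le> H x \<and> H x \<le> 1"
    and tau: "tau > 0" and I: "L1norm H > 0" and L: "L > 0" and m: "m > 0" and R: "RL H tau L > 0"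
    and D: "RL H tau L powr (1 + 1 / alpha) < real L / 2" and T: "T \<le> RL H tau L powr (1 / alpha)"
    and mass: "ennreal (3 * L1norm H / 4) \<le> (\<integral>\<^sup>+u. ennreal (H u * indicator {0<..T} u) \<partial>lborel)"
  shows "0 \<le> b1 H tau alpha m L"
    and "b1 H tau alpha m L \<le> real L * (12 * RL H tau L powr (1 + 1 / alpha) + 3) * (tau * real L) powr (- 3 / 2)"
proof -
  \<comment> \<open>Any fraction c > 1/2 of the mass of H would do here, giving exp (-2G) = (\<tau>L) powr (-2c).\<close>
  define G where "G = 3 * RL H tau L * L1norm H / 2"
  have "ennreal G = ennreal (2 * RL H tau L) * ennreal (3 * L1norm H / 4)"
    using R I by (simp add: G_def flip: ennreal_mult)
  also have "\<dots> \<le> ennreal (2 * RL H tau L) * (\<integral>\<^sup>+u. ennreal (H u * indicator {0<..T} u) \<partial>lborel)"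
    using mass by (rule mult_left_mono) simp
  also have "\<dots> \<le> ennreal (2 * RL H tau L)
      * (\<integral>\<^sup>+u. ennreal (H u * indicator {0<..RL H tau L powr (1 / alpha)} u) \<partial>lborel)"
  proof (rule mult_left_mono[OF nn_integral_mono])
    show "ennreal (H u * indicator {0<..T} u) \<le> ennreal (H u * indicator {0<..RL H tau L powr (1 / alpha)} u)"
      for u using T by (auto simp: indicator_def)
  qed simp
  also have "\<dots> \<le> (\<integral>\<^sup>+t. ennreal (conn_profile H tau alpha L \<bar>t\<bar>) \<partial>lborel)"
    by (rule nn_integral_conn_profile_ge[OF H_meas H_bounds R])
  finally have G: "ennreal G \<le> \<dots>" .
  have "exp (- 2 * G) = (tau * real L) powr (- 3 / 2)"
    using tau L I by (simp add: G_def RL_def powr_def)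
  then show "0 \<le> b1 H tau alpha m L"
    and "b1 H tau alpha m L \<le> real L * (12 * RL H tau L powr (1 + 1 / alpha) + 3) * (tau * real L) powr (- 3 / 2)"
    using b1_le_exp[OF H_meas H_bounds L m R D G] R I by (simp_all add: G_def)
qed

section \<open>The limit L \<rightarrow> \<infinity>\<close>

lemma exists_nn_integral_Ioc_gt:
  fixes H :: "real \<Rightarrow> real"
  assumes H_int: "set_integrable lborel {0..} H" and H_nonneg: "\<forall>x\<ge>0. 0 \<le> H x"
    and c: "0 \<le> c" "c < (LBINT x:{0..}. H x)"
  shows "\<exists>T. ennreal c < (\<integral>\<^sup>+u. ennreal (H u * indicator {0<..T} u) \<partial>lborel)"
proof -
  define H' where "H' = (\<lambda>u. indicator {0..} u * H u)"
  have [measurable]: "H' \<in> borel_measurable borel" and "integrable lborel H'"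
    using H_int by (auto simp: set_integrable_def H'_def)
  define f where "f k u = ennreal (H' u * indicator {0<..real k} u)" for k :: nat and u
  have inc: "incseq f"
    using H_nonneg by (auto simp: incseq_def le_fun_def f_def H'_def indicator_def intro!: ennreal_leI)
  have lim: "(\<lambda>k. f k u) \<longlonglongrightarrow> ennreal (H' u * indicator {0<..} u)" for u
  proof (cases "u > 0")
    case True
    have "eventually (\<lambda>k. f k u = ennreal (H' u * indicator {0<..} u)) sequentially"
      using eventually_ge_at_top[of "nat \<lceil>u\<rceil>"]
      by eventually_elim (use True in \<open>auto simp: f_def indicator_def\<close>)
    then show ?thesis by (rule tendsto_eventually)
  qed (simp add: f_def indicator_def)
  have "AE u in lborel. ennreal (H' u * indicator {0<..} u) = ennreal (H' u)"
    using AE_lborel_singleton[of 0] by eventually_elim (auto simp: H'_def indicator_def)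
  then have "(\<integral>\<^sup>+u. ennreal (H' u * indicator {0<..} u) \<partial>lborel) = (\<integral>\<^sup>+u. ennreal (H' u) \<partial>lborel)"
    by (rule nn_integral_cong_AE)
  also have "\<dots> = ennreal (LBINT x:{0..}. H x)"
    using \<open>integrable lborel H'\<close> H_nonneg
    by (subst nn_integral_eq_integral) (auto simp: H'_def set_lebesgue_integral_def indicator_def)
  finally have lim_int: "(\<integral>\<^sup>+u. ennreal (H' u * indicator {0<..} u) \<partial>lborel) = ennreal (LBINT x:{0..}. H x)" .
  have f_meas: "f k \<in> borel_measurable lborel" for k
    unfolding f_def by measurable
  from nn_integral_LIMSEQ[OF inc f_meas lim] lim_int
  have "(\<lambda>k. integral\<^sup>N lborel (f k)) \<longlonglongrightarrow> ennreal (LBINT x:{0..}. H x)"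
    by simp
  then obtain k where "ennreal c < integral\<^sup>N lborel (f k)"
    using c order_tendstoD(1)[of _ "ennreal (LBINT x:{0..}. H x)" sequentially "ennreal c"]
    by (auto simp: ennreal_lessI eventually_sequentially)
  then show ?thesis
    by (auto simp: f_def H'_def indicator_def intro!: exI[of _ "real k"] elim!: order.strict_trans2 intro!: nn_integral_mono)
qed

lemma eventually_RL_large:
  assumes tau: "tau > 0" and I: "L1norm H > 0" and alpha: "alpha > 0"
  shows "eventually (\<lambda>L. 0 < RL H tau L \<and> RL H tau L powr (1 + 1 / alpha) < real L / 2
    \<and> T \<le> RL H tau L powr (1 / alpha)) sequentially"
proof -
  have "eventually (\<lambda>x. 0 < ln (tau * x) / (2 * c)) at_top"
    and "eventually (\<lambda>x. (ln (tau * x) / (2 * c)) powr (1 + 1 / alpha) < x / 2) at_top"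
    and "filterlim (\<lambda>x. (ln (tau * x) / (2 * c)) powr (1 / alpha)) at_top at_top"
    if "c > 0" for c :: real
    using tau alpha that by real_asymp+
  from this(1,2)[OF I] this(3)[OF I, unfolded filterlim_at_top, rule_format, of T]
  have "eventually (\<lambda>x. 0 < ln (tau * x) / (2 * L1norm H)
      \<and> (ln (tau * x) / (2 * L1norm H)) powr (1 + 1 / alpha) < x / 2
      \<and> T \<le> (ln (tau * x) / (2 * L1norm H)) powr (1 / alpha)) at_top"
    by eventually_elim blast
  from eventually_compose_filterlim[OF this filterlim_real_sequentially] show ?thesis
    by (simp add: RL_def)
qed

lemma b1_decay_bound_tendsto_0:
  assumes tau: "tau > 0" and I: "L1norm H > 0" and alpha: "alpha > 0"
  shows "(\<lambda>L. real L * (12 * RL H tau L powr (1 + 1 / alpha) + 3) * (tau * real L) powr (- 3 / 2)) \<longlonglongrightarrow> 0"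
proof -
  have "((\<lambda>x. x * (12 * (ln (tau * x) / (2 * c)) powr (1 + 1 / alpha) + 3) * (tau * x) powr (- 3 / 2))
      \<longlongrightarrow> 0) at_top" if "c > 0" for c :: real
    using tau alpha that by real_asymp
  from filterlim_compose[OF this[OF I] filterlim_real_sequentially] show ?thesis
    by (simp add: RL_def o_def)
qed

lemma limsup_tendsto_0_if_bounded:
  fixes f :: "nat \<Rightarrow> nat \<Rightarrow> real" and u :: "nat \<Rightarrow> real"
  assumes bounded: "eventually (\<lambda>L. \<forall>m>0. 0 \<le> f m L \<and> f m L \<le> u L) sequentially"
    and u: "u \<longlonglongrightarrow> 0"
  shows "(\<lambda>L. limsup (\<lambda>m. ereal (f m L))) \<longlonglongrightarrow> 0"
proof (rule tendsto_sandwich[where f="\<lambda>_. 0" and h="\<lambda>L. ereal (u L)"])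
  have "eventually (\<lambda>L. eventually (\<lambda>m. 0 \<le> ereal (f m L) \<and> ereal (f m L) \<le> ereal (u L)) sequentially) sequentially"
    using bounded by eventually_elim (auto intro: eventually_mono[OF eventually_gt_at_top[of 0]])
  then show "eventually (\<lambda>L. 0 \<le> limsup (\<lambda>m. ereal (f m L))) sequentially"
    and "eventually (\<lambda>L. limsup (\<lambda>m. ereal (f m L)) \<le> ereal (u L)) sequentially"
    by (auto elim!: eventually_mono intro: le_Limsup Limsup_bounded)
qed (use u in \<open>simp_all add: zero_ereal_def\<close>)

theorem lemma5:
  fixes H :: "real \<Rightarrow> real" and tau alpha :: real
  assumes "set_borel_measurable borel {0..} H"
    and "\<forall>x\<ge>0. 0 \<le> H x \<and> H x \<le> 1"
    and "set_integrable lborel {0..} H"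
    and "(LBINT x:{0..}. (H x)\<^sup>2) < (LBINT x:{0..}. H x)"
    and "tau > 0" and "alpha > 0"
  shows "(\<lambda>L::nat. limsup (\<lambda>m::nat. ereal (b1 H tau alpha m L))) \<longlonglongrightarrow> 0"
proof -
  note H_meas = assms(1) and H_bounds = assms(2) and tau = assms(5) and alpha = assms(6)
  \<comment> \<open>The hypothesis on the L2 norm of H is only used to ensure that its L1 norm is positive.\<close>
  have "0 \<le> (LBINT x:{0..}. (H x)\<^sup>2)"
    by (auto simp: set_lebesgue_integral_def indicator_def intro!: integral_nonneg)
  then have I: "L1norm H > 0"
    using assms(4) by (simp add: L1norm_def)
  have H_nonneg: "\<forall>x\<ge>0. 0 \<le> H x"
    using H_bounds by simp
  obtain T where T: "ennreal (3 * L1norm H / 4) < (\<integral>\<^sup>+u. ennreal (H u * indicator {0<..T} u) \<partial>lborel)"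
    using exists_nn_integral_Ioc_gt[OF assms(3) H_nonneg, of "3 * L1norm H / 4"] I by (auto simp: L1norm_def)
  have "eventually (\<lambda>L. \<forall>m>0. 0 \<le> b1 H tau alpha m L \<and> b1 H tau alpha m L
      \<le> real L * (12 * RL H tau L powr (1 + 1 / alpha) + 3) * (tau * real L) powr (- 3 / 2)) sequentially"
    using eventually_RL_large[OF tau I alpha, of T] eventually_gt_at_top[of 0]
  proof eventually_elim
    case (elim L)
    then show ?case
      using b1_le_decay[OF H_meas H_bounds tau I _ _ _ _ _ less_imp_le[OF T]] by auto
  qed
  then show ?thesis
    using b1_decay_bound_tendsto_0[OF tau I alpha] by (rule limsup_tendsto_0_if_bounded)
qed

end
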